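(* Let $M=\mathbb N\cup\{0\}$ with the metric $|\cdot|$ and base point $0$, and define $f\colon M\to M$ by $f(2n)=0$ and $f(2n+1)=1$ for $n\ge0$. Then $f$ is Lipschitz with $f(0)=0$, $\widehat f\colon\mathcal F(M)\to\mathcal F(M)$ is compact, but $f$ is not flat at infinity: with $x_n=2n+1$, $y_n=2n$ one has $d(x_n,0),d(y_n,0)\to\infty$ while $\frac{d(f(x_n),f(y_n))}{d(x_n,y_n)}=1$ for all $n$.
   Context: Scalars are $\mathbb K=\mathbb R$ or $\mathbb C$. For a pointed metric space $(M,d,0_M)$, $\mathrm{Lip}_0(M)$ denotes the Banach space of Lipschitz functions $g\colon M\to\mathbb K$ with $g(0_M)=0$ normed by the best Lipschitz constant; $\delta(x)\in\mathrm{Lip}_0(M)^*$ is evaluation at $x$; the Lipschitz-free space $\mathcal F(M)$ is the norm-closed linear span of $\{\delta(x):x\in M\}$ in $\mathrm{Lip}_0(M)^*$. For a Lipschitz map $f\colon M\to N$ with $f(0_M)=0_N$, $\widehat f\colon\mathcal F(M)\to\mathcal F(N)$ is the unique bounded linear operator with $\widehat f(\delta(x))=\delta(f(x))$ for all $x\in M$. *)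

theory Defs
  imports "HOL-Analysis.Analysis"
begin

definition dM :: "nat \<Rightarrow> nat \<Rightarrow> real" where
  "dM m n = \<bar>real m - real n\<bar>"

definition lipschitz_M :: "(nat \<Rightarrow> 'k::real_normed_field) \<Rightarrow> bool" where
  "lipschitz_M g \<longleftrightarrow> (\<exists>C. \<forall>x y. norm (g x - g y) \<le> C * dM x y)"

definition lipschitz_MM :: "(nat \<Rightarrow> nat) \<Rightarrow> bool" where
  "lipschitz_MM f \<longleftrightarrow> (\<exists>C. \<forall>x y. dM (f x) (f y) \<le> C * dM x y)"

definition Lip0 :: "(nat \<Rightarrow> 'k::real_normed_field) set" where
  "Lip0 = {g. g 0 = 0 \<and> lipschitz_M g}"

definition lipnorm :: "(nat \<Rightarrow> 'k::real_normed_field) \<Rightarrow> real" where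
  "lipnorm g = Sup {norm (g x - g y) / dM x y | x y. x \<noteq> y}"

text \<open>The dual Lip_0(M)^*: bounded linear functionals on Lip_0(M), represented as functions
  that vanish outside Lip_0(M) (so that each functional has a unique representative).\<close>
definition Lip0_dual :: "((nat \<Rightarrow> 'k::real_normed_field) \<Rightarrow> 'k) set" where
  "Lip0_dual = {\<phi>.
     (\<forall>g\<in>Lip0. \<forall>h\<in>Lip0. \<phi> (\<lambda>x. g x + h x) = \<phi> g + \<phi> h) \<and>
     (\<forall>c. \<forall>g\<in>Lip0. \<phi> (\<lambda>x. c * g x) = c * \<phi> g) \<and>
     (\<exists>C. \<forall>g\<in>Lip0. norm (\<phi> g) \<le> C * lipnorm g) \<and>
     (\<forall>g. g \<notin> Lip0 \<longrightarrow> \<phi> g = 0)}"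

definition dnorm :: "((nat \<Rightarrow> 'k::real_normed_field) \<Rightarrow> 'k) \<Rightarrow> real" where
  "dnorm \<phi> = Sup {norm (\<phi> g) | g. g \<in> Lip0 \<and> lipnorm g \<le> 1}"

definition delta :: "nat \<Rightarrow> (nat \<Rightarrow> 'k::real_normed_field) \<Rightarrow> 'k" where
  "delta x = (\<lambda>g. if g \<in> Lip0 then g x else 0)"

definition delta_span :: "((nat \<Rightarrow> 'k::real_normed_field) \<Rightarrow> 'k) set" where
  "delta_span = {\<phi>. \<exists>S c. finite S \<and> \<phi> = (\<lambda>g. \<Sum>x\<in>S. c x * delta x g)}"

definition FreeM :: "((nat \<Rightarrow> 'k::real_normed_field) \<Rightarrow> 'k) set" where
  "FreeM = {\<phi> \<in> Lip0_dual. \<forall>e>0. \<exists>\<psi>\<in>delta_span. dnorm (\<lambda>g. \<phi> g - \<psi> g) < e}"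

definition is_hat :: "(((nat \<Rightarrow> 'k::real_normed_field) \<Rightarrow> 'k) \<Rightarrow> ((nat \<Rightarrow> 'k) \<Rightarrow> 'k))
                      \<Rightarrow> (nat \<Rightarrow> nat) \<Rightarrow> bool" where
  "is_hat T f \<longleftrightarrow>
     (\<forall>\<mu>\<in>FreeM. T \<mu> \<in> FreeM) \<and>
     (\<forall>\<mu>\<in>FreeM. \<forall>\<nu>\<in>FreeM. T (\<lambda>g. \<mu> g + \<nu> g) = (\<lambda>g. T \<mu> g + T \<nu> g)) \<and>
     (\<forall>c. \<forall>\<mu>\<in>FreeM. T (\<lambda>g. c * \<mu> g) = (\<lambda>g. c * T \<mu> g)) \<and>
     (\<exists>C. \<forall>\<mu>\<in>FreeM. dnorm (T \<mu>) \<le> C * dnorm \<mu>) \<and>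
     (\<forall>x. T (delta x) = delta (f x))"

definition compact_op_FreeM :: "(((nat \<Rightarrow> 'k::real_normed_field) \<Rightarrow> 'k) \<Rightarrow> ((nat \<Rightarrow> 'k) \<Rightarrow> 'k)) \<Rightarrow> bool" where
  "compact_op_FreeM T \<longleftrightarrow>
     (\<forall>s :: nat \<Rightarrow> ((nat \<Rightarrow> 'k) \<Rightarrow> 'k). (\<forall>n. s n \<in> FreeM \<and> dnorm (s n) \<le> 1) \<longrightarrow>
        (\<exists>(r :: nat \<Rightarrow> nat) (\<mu> :: (nat \<Rightarrow> 'k) \<Rightarrow> 'k). strict_mono r \<and> \<mu> \<in> FreeM \<and>
           (\<lambda>n. dnorm (\<lambda>g. T (s (r n)) g - \<mu> g)) \<longlonglongrightarrow> 0))"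

definition hat_compact :: "'k::real_normed_field itself \<Rightarrow> (nat \<Rightarrow> nat) \<Rightarrow> bool" where
  "hat_compact _ f \<longleftrightarrow>
     (\<exists>T :: ((nat \<Rightarrow> 'k) \<Rightarrow> 'k) \<Rightarrow> ((nat \<Rightarrow> 'k) \<Rightarrow> 'k). is_hat T f) \<and>
     (\<forall>T :: ((nat \<Rightarrow> 'k) \<Rightarrow> 'k) \<Rightarrow> ((nat \<Rightarrow> 'k) \<Rightarrow> 'k). is_hat T f \<longrightarrow> compact_op_FreeM T)"

end

theory Submission
  imports Defs "HOL-Real_Asymp.Real_Asymp"
begin

text \<open>
  A map with values in \<open>{0, 1}\<close> fixing \<open>0\<close> is automatically Lipschitz on \<open>M\<close>, because distinct
  points are at distance at least \<open>1\<close>. Its linearisation sends every finite combination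
  \<open>\<Sum> c\<^sub>x \<delta>(x)\<close> to a multiple of \<open>\<delta>(1)\<close>, since \<open>\<delta>(0) = 0\<close>. By continuity every operator \<open>T\<close> with
  \<open>T \<delta>(x) = \<delta>(f x)\<close> therefore satisfies \<open>T \<mu> g = (T \<mu> h) \<cdot> g 1\<close>, where \<open>h\<close> is the indicator of
  \<open>M - {0}\<close>: it has rank one and is compact by Bolzano--Weierstrass in the scalar field.
\<close>

lemma dM_self [simp]: "dM x x = 0"
  unfolding dM_def by simp

lemma dM_nonneg: "0 \<le> dM x y"
  unfolding dM_def by simp

lemma dM_ge_one: "x \<noteq> y \<Longrightarrow> 1 \<le> dM x y"
  unfolding dM_def by (cases "x < y") auto

lemma dM_pos: "x \<noteq> y \<Longrightarrow> 0 < dM x y"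
  using dM_ge_one by fastforce

lemma lipschitz_MM_nonneg_constant:
  assumes "lipschitz_MM f"
  obtains C where "0 \<le> C" "\<And>x y. dM (f x) (f y) \<le> C * dM x y"
proof -
  obtain C where C: "\<And>x y. dM (f x) (f y) \<le> C * dM x y"
    using assms unfolding lipschitz_MM_def by blast
  have "dM (f x) (f y) \<le> max C 0 * dM x y" for x y
    by (rule order_trans[OF C mult_right_mono]) (simp_all add: dM_nonneg)
  then show thesis using that[of "max C 0"] by simp
qed

lemma dM_le_if_le_one:
  assumes "\<And>x. f x \<le> 1"
  shows "dM (f x) (f y) \<le> 1 * dM x y"
proof (cases "x = y")
  case False
  have "dM (f x) (f y) \<le> 1"
    using assms[of x] assms[of y] by (auto simp: dM_def)
  with dM_ge_one[OF False] show ?thesis by simp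
qed simp

lemma lipschitz_MM_if_le_one: "(\<And>x. f x \<le> 1) \<Longrightarrow> lipschitz_MM f"
  unfolding lipschitz_MM_def using dM_le_if_le_one by blast

lemma Lip0_iff: "g \<in> Lip0 \<longleftrightarrow> g 0 = 0 \<and> (\<exists>C. \<forall>x y. norm (g x - g y) \<le> C * dM x y)"
  unfolding Lip0_def lipschitz_M_def by simp

lemma lipnorm_least:
  fixes g :: "nat \<Rightarrow> 'k::real_normed_field"
  assumes "\<And>x y. x \<noteq> y \<Longrightarrow> norm (g x - g y) \<le> B * dM x y"
  shows "lipnorm g \<le> B"
  unfolding lipnorm_def
proof (rule cSup_least)
  have "norm (g 0 - g 1) / dM 0 1 \<in> {norm (g x - g y) / dM x y | x y. x \<noteq> y}"
    by (intro CollectI exI[of _ 0] exI[of _ 1]) simp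
  then show "{norm (g x - g y) / dM x y | x y. x \<noteq> y} \<noteq> {}"
    by blast
next
  fix r assume "r \<in> {norm (g x - g y) / dM x y | x y. x \<noteq> y}"
  then obtain x y where "r = norm (g x - g y) / dM x y" "x \<noteq> y" by blast
  then show "r \<le> B" using assms dM_pos by (simp add: pos_divide_le_eq)
qed

lemma lipnorm_bound:
  fixes g :: "nat \<Rightarrow> 'k::real_normed_field"
  assumes "g \<in> Lip0"
  shows "norm (g x - g y) \<le> lipnorm g * dM x y"
proof (cases "x = y")
  case False
  obtain C where C: "\<And>x y. norm (g x - g y) \<le> C * dM x y"
    using assms by (auto simp: Lip0_iff)
  have "bdd_above {norm (g x - g y) / dM x y | x y. x \<noteq> y}"
    using C dM_pos by (intro bdd_aboveI[of _ C]) (auto simp: pos_divide_le_eq)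
  then have "norm (g x - g y) / dM x y \<le> lipnorm g"
    unfolding lipnorm_def using False by (intro cSup_upper) auto
  then show ?thesis using dM_pos[OF False] by (simp add: pos_divide_le_eq)
qed simp

lemma lipnorm_nonneg:
  fixes g :: "nat \<Rightarrow> 'k::real_normed_field"
  assumes "g \<in> Lip0"
  shows "0 \<le> lipnorm g"
proof -
  have "norm (g 0 - g 1) \<le> lipnorm g"
    using lipnorm_bound[OF assms, of 0 1] by (simp add: dM_def)
  then show ?thesis by (rule order_trans[OF norm_ge_zero])
qed

lemma norm_le_lipnorm:
  fixes g :: "nat \<Rightarrow> 'k::real_normed_field"
  assumes "g \<in> Lip0"
  shows "norm (g x) \<le> lipnorm g * real x"
  using lipnorm_bound[OF assms, of x 0] assms by (simp add: Lip0_iff dM_def)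

lemma Lip0_zero: "(\<lambda>_. 0) \<in> Lip0"
  by (auto simp: Lip0_iff intro!: exI[of _ 0])

lemma lipnorm_zero: "lipnorm (\<lambda>_. 0 :: 'k::real_normed_field) = 0"
proof (rule antisym)
  show "lipnorm (\<lambda>_. 0 :: 'k) \<le> 0"
    by (rule lipnorm_least) simp
  show "0 \<le> lipnorm (\<lambda>_. 0 :: 'k)"
    by (rule lipnorm_nonneg[OF Lip0_zero])
qed

lemma Lip0_add:
  fixes g h :: "nat \<Rightarrow> 'k::real_normed_field"
  assumes "g \<in> Lip0" "h \<in> Lip0"
  shows "(\<lambda>x. g x + h x) \<in> Lip0"
proof -
  have "norm ((g x + h x) - (g y + h y)) \<le> (lipnorm g + lipnorm h) * dM x y" for x y
    using norm_triangle_ineq[of "g x - g y" "h x - h y"]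
      lipnorm_bound[OF assms(1), of x y] lipnorm_bound[OF assms(2), of x y]
    by (simp add: algebra_simps)
  then show ?thesis using assms by (auto simp: Lip0_iff)
qed

lemma norm_cmult_diff:
  fixes c :: "'k::real_normed_field"
  shows "norm (c * a - c * b) = norm c * norm (a - b)"
  by (metis norm_mult right_diff_distrib)

lemma Lip0_cmult:
  fixes g :: "nat \<Rightarrow> 'k::real_normed_field"
  assumes "g \<in> Lip0"
  shows "(\<lambda>x. c * g x) \<in> Lip0"
proof -
  have "norm (c * g x - c * g y) \<le> (norm c * lipnorm g) * dM x y" for x y
    using lipnorm_bound[OF assms, of x y]
    by (simp add: norm_cmult_diff mult.assoc mult_left_mono)
  then show ?thesis using assms by (auto simp: Lip0_iff)
qed

lemma lipnorm_cmult_le: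
  fixes g :: "nat \<Rightarrow> 'k::real_normed_field"
  assumes "g \<in> Lip0"
  shows "lipnorm (\<lambda>x. c * g x) \<le> norm c * lipnorm g"
  using lipnorm_bound[OF assms]
  by (intro lipnorm_least) (simp add: norm_cmult_diff mult.assoc mult_left_mono)

lemma Lip0_comp:
  fixes g :: "nat \<Rightarrow> 'k::real_normed_field"
  assumes g: "g \<in> Lip0" and f: "f 0 = 0" "\<And>x y. dM (f x) (f y) \<le> C * dM x y"
  shows "(\<lambda>x. g (f x)) \<in> Lip0" "lipnorm (\<lambda>x. g (f x)) \<le> lipnorm g * C"
proof -
  have bound: "norm (g (f x) - g (f y)) \<le> (lipnorm g * C) * dM x y" for x y
    using lipnorm_bound[OF g, of "f x" "f y"]
      mult_left_mono[OF f(2) lipnorm_nonneg[OF g], of x y]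
    by (simp add: mult.assoc)
  then show "(\<lambda>x. g (f x)) \<in> Lip0" using g f(1) by (auto simp: Lip0_iff)
  show "lipnorm (\<lambda>x. g (f x)) \<le> lipnorm g * C" using bound by (rule lipnorm_least)
qed

lemma dnorm_least:
  fixes \<phi> :: "(nat \<Rightarrow> 'k::real_normed_field) \<Rightarrow> 'k"
  assumes "\<And>g. g \<in> Lip0 \<Longrightarrow> lipnorm g \<le> 1 \<Longrightarrow> norm (\<phi> g) \<le> B"
  shows "dnorm \<phi> \<le> B"
  unfolding dnorm_def
proof (rule cSup_least)
  have "norm (\<phi> (\<lambda>_. 0)) \<in> {norm (\<phi> g) | g. g \<in> Lip0 \<and> lipnorm g \<le> 1}"
    by (intro CollectI exI[of _ "\<lambda>_. 0"]) (simp add: Lip0_zero lipnorm_zero)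
  then show "{norm (\<phi> g) | g. g \<in> Lip0 \<and> lipnorm g \<le> 1} \<noteq> {}"
    by blast
qed (use assms in auto)

lemma dnorm_upper:
  fixes \<phi> :: "(nat \<Rightarrow> 'k::real_normed_field) \<Rightarrow> 'k"
  assumes "\<phi> \<in> Lip0_dual" "g \<in> Lip0" "lipnorm g \<le> 1"
  shows "norm (\<phi> g) \<le> dnorm \<phi>"
  unfolding dnorm_def
proof (rule cSup_upper)
  obtain C where C: "\<And>g. g \<in> Lip0 \<Longrightarrow> norm (\<phi> g) \<le> C * lipnorm g"
    using assms(1) unfolding Lip0_dual_def by blast
  have "norm (\<phi> h) \<le> \<bar>C\<bar>" if "h \<in> Lip0" "lipnorm h \<le> 1" for h
  proof -
    have "C * lipnorm h \<le> \<bar>C\<bar> * 1"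
      using that lipnorm_nonneg[OF that(1)] by (intro mult_mono) auto
    then show ?thesis using C[OF that(1)] by linarith
  qed
  then show "bdd_above {norm (\<phi> g) | g. g \<in> Lip0 \<and> lipnorm g \<le> 1}"
    by (intro bdd_aboveI[of _ "\<bar>C\<bar>"]) blast
qed (use assms in auto)

lemma dnorm_nonneg:
  fixes \<phi> :: "(nat \<Rightarrow> 'k::real_normed_field) \<Rightarrow> 'k"
  assumes "\<phi> \<in> Lip0_dual"
  shows "0 \<le> dnorm \<phi>"
proof -
  have "norm (\<phi> (\<lambda>_. 0)) \<le> dnorm \<phi>"
    by (rule dnorm_upper[OF assms Lip0_zero]) (simp add: lipnorm_zero)
  then show ?thesis
    by (rule order_trans[OF norm_ge_zero])
qed

lemma Lip0_dual_add:
  "\<phi> \<in> Lip0_dual \<Longrightarrow> g \<in> Lip0 \<Longrightarrow> h \<in> Lip0 \<Longrightarrow> \<phi> (\<lambda>x. g x + h x) = \<phi> g + \<phi> h"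
  unfolding Lip0_dual_def by blast

lemma Lip0_dual_cmult:
  "\<phi> \<in> Lip0_dual \<Longrightarrow> g \<in> Lip0 \<Longrightarrow> \<phi> (\<lambda>x. c * g x) = c * \<phi> g"
  unfolding Lip0_dual_def by blast

lemma Lip0_dual_outside: "\<phi> \<in> Lip0_dual \<Longrightarrow> g \<notin> Lip0 \<Longrightarrow> \<phi> g = 0"
  unfolding Lip0_dual_def by blast

lemma Lip0_dual_bound:
  fixes \<phi> :: "(nat \<Rightarrow> 'k::real_normed_field) \<Rightarrow> 'k"
  assumes \<phi>: "\<phi> \<in> Lip0_dual" and g: "g \<in> Lip0"
  shows "norm (\<phi> g) \<le> dnorm \<phi> * lipnorm g"
proof -
  note scale = Lip0_dual_cmult[OF \<phi> g]
  show ?thesis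
  proof (cases "lipnorm g = 0")
    case True
    then have "g = (\<lambda>x. 0 * g x)"
      using norm_le_lipnorm[OF g] by (simp add: fun_eq_iff)
    then show ?thesis using scale[of 0] True by simp
  next
    case False
    define L where "L = lipnorm g"
    have L: "0 < L" using False lipnorm_nonneg[OF g] by (simp add: L_def)
    have "lipnorm (\<lambda>x. of_real (1 / L) * g x) \<le> norm (of_real (1 / L) :: 'k) * L"
      unfolding L_def by (rule lipnorm_cmult_le[OF g])
    also have "\<dots> = 1"
      using L by (simp add: norm_divide)
    finally have "norm (\<phi> (\<lambda>x. of_real (1 / L) * g x)) \<le> dnorm \<phi>"
      using dnorm_upper[OF \<phi> Lip0_cmult[OF g]] by blast
    then have "norm (of_real (1 / L) * \<phi> g) \<le> dnorm \<phi>"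
      by (simp only: scale)
    then have "norm (\<phi> g) / L \<le> dnorm \<phi>"
      using L by (simp add: norm_mult norm_divide)
    then show ?thesis using L by (simp add: L_def pos_divide_le_eq mult.commute)
  qed
qed

lemma Lip0_dual_lincomb:
  fixes \<phi> \<psi> :: "(nat \<Rightarrow> 'k::real_normed_field) \<Rightarrow> 'k"
  assumes \<phi>: "\<phi> \<in> Lip0_dual" and \<psi>: "\<psi> \<in> Lip0_dual"
  shows "(\<lambda>g. \<phi> g + c * \<psi> g) \<in> Lip0_dual"
  unfolding Lip0_dual_def mem_Collect_eq
proof (intro conjI)
  have "norm (\<phi> g + c * \<psi> g) \<le> (dnorm \<phi> + norm c * dnorm \<psi>) * lipnorm g" if "g \<in> Lip0" for g
  proof -
    have "norm (\<phi> g + c * \<psi> g) \<le> norm (\<phi> g) + norm c * norm (\<psi> g)"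
      by (metis norm_mult norm_triangle_ineq)
    also have "\<dots> \<le> dnorm \<phi> * lipnorm g + norm c * (dnorm \<psi> * lipnorm g)"
      using Lip0_dual_bound[OF \<phi> that] Lip0_dual_bound[OF \<psi> that]
      by (intro add_mono mult_left_mono) auto
    finally show ?thesis by (simp add: algebra_simps)
  qed
  then show "\<exists>C. \<forall>g\<in>Lip0. norm (\<phi> g + c * \<psi> g) \<le> C * lipnorm g"
    by blast
  show "\<forall>g\<in>Lip0. \<forall>h\<in>Lip0. \<phi> (\<lambda>x. g x + h x) + c * \<psi> (\<lambda>x. g x + h x)
      = (\<phi> g + c * \<psi> g) + (\<phi> h + c * \<psi> h)"
    by (simp add: Lip0_dual_add[OF \<phi>] Lip0_dual_add[OF \<psi>] algebra_simps)
  show "\<forall>d. \<forall>g\<in>Lip0. \<phi> (\<lambda>x. d * g x) + c * \<psi> (\<lambda>x. d * g x) = d * (\<phi> g + c * \<psi> g)"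
    by (simp add: Lip0_dual_cmult[OF \<phi>] Lip0_dual_cmult[OF \<psi>] algebra_simps)
  show "\<forall>g. g \<notin> Lip0 \<longrightarrow> \<phi> g + c * \<psi> g = 0"
    by (simp add: Lip0_dual_outside[OF \<phi>] Lip0_dual_outside[OF \<psi>])
qed

lemma Lip0_dual_diff:
  "\<phi> \<in> Lip0_dual \<Longrightarrow> \<psi> \<in> Lip0_dual \<Longrightarrow> (\<lambda>g. \<phi> g - \<psi> g) \<in> Lip0_dual"
  using Lip0_dual_lincomb[of \<phi> \<psi> "-1"] by simp

lemma dnorm_lincomb_le:
  fixes \<phi> \<psi> :: "(nat \<Rightarrow> 'k::real_normed_field) \<Rightarrow> 'k"
  assumes "\<phi> \<in> Lip0_dual" "\<psi> \<in> Lip0_dual"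
  shows "dnorm (\<lambda>g. \<phi> g + c * \<psi> g) \<le> dnorm \<phi> + norm c * dnorm \<psi>"
proof (rule dnorm_least)
  fix g :: "nat \<Rightarrow> 'k" assume g: "g \<in> Lip0" "lipnorm g \<le> 1"
  have "norm (\<phi> g + c * \<psi> g) \<le> norm (\<phi> g) + norm c * norm (\<psi> g)"
    by (metis norm_mult norm_triangle_ineq)
  also have "\<dots> \<le> dnorm \<phi> + norm c * dnorm \<psi>"
    using dnorm_upper[OF assms(1) g] dnorm_upper[OF assms(2) g]
    by (intro add_mono mult_left_mono) auto
  finally show "norm (\<phi> g + c * \<psi> g) \<le> dnorm \<phi> + norm c * dnorm \<psi>" .
qed

lemma delta_in_Lip0_dual: "delta x \<in> (Lip0_dual :: ((nat \<Rightarrow> 'k::real_normed_field) \<Rightarrow> 'k) set)"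
proof -
  have "norm (delta x g) \<le> real x * lipnorm g" if "g \<in> Lip0" for g :: "nat \<Rightarrow> 'k"
    using norm_le_lipnorm[OF that] that by (simp add: delta_def mult.commute)
  then show ?thesis
    unfolding Lip0_dual_def by (auto simp: delta_def Lip0_add Lip0_cmult)
qed

lemma delta_span_induct [consumes 1, case_names zero add]:
  assumes "\<psi> \<in> delta_span"
    and "P (\<lambda>g. 0)"
    and "\<And>\<phi> c x. \<phi> \<in> delta_span \<Longrightarrow> P \<phi> \<Longrightarrow> P (\<lambda>g. \<phi> g + c * delta x g)"
  shows "P \<psi>"
proof -
  obtain S c where S: "finite S" "\<psi> = (\<lambda>g. \<Sum>x\<in>S. c x * delta x g)"
    using assms(1) unfolding delta_span_def by blast
  have "P (\<lambda>g. \<Sum>x\<in>S. c x * delta x g)"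
    using S(1)
  proof (induction S rule: finite_induct)
    case (insert x S)
    have "(\<lambda>g. \<Sum>x\<in>S. c x * delta x g) \<in> delta_span"
      using insert.hyps(1) unfolding delta_span_def by blast
    from assms(3)[OF this insert.IH, of "c x" x]
    show ?case using insert.hyps by (simp add: add.commute)
  qed (use assms(2) in simp)
  with S(2) show ?thesis by simp
qed

lemma delta_span_add_delta:
  assumes "\<phi> \<in> delta_span"
  shows "(\<lambda>g. \<phi> g + a * delta x g) \<in> delta_span"
proof -
  obtain S c where S: "finite S" "\<phi> = (\<lambda>g. \<Sum>y\<in>S. c y * delta y g)"
    using assms unfolding delta_span_def by blast
  define c' where "c' y = (if y \<in> S then c y else 0) + (if y = x then a else 0)" for y
  have "(\<Sum>y\<in>insert x S. c' y * delta y g) = \<phi> g + a * delta x g" for g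
  proof -
    have "(\<Sum>y\<in>S. c y * delta y g) = (\<Sum>y\<in>insert x S. (if y \<in> S then c y else 0) * delta y g)"
      using S(1) by (intro sum.mono_neutral_cong_left) auto
    then show ?thesis
      using S by (simp add: c'_def distrib_right sum.distrib if_distrib[of "\<lambda>t. t * _"] cong: if_cong)
  qed
  then show ?thesis
    unfolding delta_span_def using S(1) by (intro CollectI exI[of _ "insert x S"] exI[of _ c']) auto
qed

lemma delta_span_lincomb:
  assumes "\<phi> \<in> delta_span" "\<psi> \<in> delta_span"
  shows "(\<lambda>g. \<phi> g + c * \<psi> g) \<in> delta_span"
  using assms(2)
proof (induction rule: delta_span_induct)
  case zero
  then show ?case using assms(1) by simp
next
  case (add \<chi> a x)
  then show ?case
    using delta_span_add_delta[OF add(2), of "c * a" x] by (simp add: algebra_simps)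
qed

lemma zero_in_delta_span: "(\<lambda>g. 0) \<in> delta_span"
  unfolding delta_span_def by (intro CollectI exI[of _ "{}"]) simp

lemma delta_in_delta_span: "delta x \<in> delta_span"
  using delta_span_add_delta[OF zero_in_delta_span, of 1 x] by simp

lemma Lip0_dual_if_delta_span:
  "\<psi> \<in> delta_span \<Longrightarrow> \<psi> \<in> (Lip0_dual :: ((nat \<Rightarrow> 'k::real_normed_field) \<Rightarrow> 'k) set)"
proof (induction rule: delta_span_induct)
  case zero
  then show ?case by (auto simp: Lip0_dual_def intro!: exI[of _ 0])
qed (rule Lip0_dual_lincomb[OF _ delta_in_Lip0_dual])

lemma FreeM_subset_Lip0_dual: "\<mu> \<in> FreeM \<Longrightarrow> \<mu> \<in> Lip0_dual"
  unfolding FreeM_def by blast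

lemma FreeM_if_delta_span:
  assumes "\<psi> \<in> delta_span"
  shows "\<psi> \<in> (FreeM :: ((nat \<Rightarrow> 'k::real_normed_field) \<Rightarrow> 'k) set)"
proof -
  have "dnorm (\<lambda>g. \<psi> g - \<psi> g :: 'k) \<le> 0"
    by (rule dnorm_least) simp
  then have "dnorm (\<lambda>g. \<psi> g - \<psi> g :: 'k) < e" if "e > 0" for e
    using that by linarith
  then show ?thesis
    unfolding FreeM_def using assms Lip0_dual_if_delta_span by blast
qed

lemma FreeM_lincomb:
  fixes \<mu> \<nu> :: "(nat \<Rightarrow> 'k::real_normed_field) \<Rightarrow> 'k"
  assumes \<mu>: "\<mu> \<in> FreeM" and \<nu>: "\<nu> \<in> FreeM"
  shows "(\<lambda>g. \<mu> g + c * \<nu> g) \<in> FreeM"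
  unfolding FreeM_def mem_Collect_eq
proof (intro conjI allI impI)
  show "(\<lambda>g. \<mu> g + c * \<nu> g) \<in> Lip0_dual"
    using Lip0_dual_lincomb \<mu> \<nu> FreeM_subset_Lip0_dual by blast
  fix e :: real assume e: "e > 0"
  define e' where "e' = e / (2 * (1 + norm c))"
  have n: "0 < 1 + norm c"
    by (simp add: add_pos_nonneg)
  have e': "0 < e'" "e' + norm c * e' = e / 2"
    using e n unfolding e'_def by (simp, simp add: divide_simps, simp add: algebra_simps)
  obtain \<psi>1 where \<psi>1: "\<psi>1 \<in> delta_span" "dnorm (\<lambda>g. \<mu> g - \<psi>1 g) < e'"
    using \<mu> e'(1) unfolding FreeM_def by blast
  obtain \<psi>2 where \<psi>2: "\<psi>2 \<in> delta_span" "dnorm (\<lambda>g. \<nu> g - \<psi>2 g) < e'"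
    using \<nu> e'(1) unfolding FreeM_def by blast
  have dual: "(\<lambda>g. \<mu> g - \<psi>1 g) \<in> Lip0_dual" "(\<lambda>g. \<nu> g - \<psi>2 g) \<in> Lip0_dual"
    using Lip0_dual_diff FreeM_subset_Lip0_dual Lip0_dual_if_delta_span
      \<mu> \<nu> \<psi>1(1) \<psi>2(1) by blast+
  have "dnorm (\<lambda>g. \<mu> g + c * \<nu> g - (\<psi>1 g + c * \<psi>2 g))
      = dnorm (\<lambda>g. (\<mu> g - \<psi>1 g) + c * (\<nu> g - \<psi>2 g))"
    by (simp add: algebra_simps)
  also have "\<dots> \<le> dnorm (\<lambda>g. \<mu> g - \<psi>1 g) + norm c * dnorm (\<lambda>g. \<nu> g - \<psi>2 g)"
    by (rule dnorm_lincomb_le[OF dual])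
  also have "\<dots> \<le> e' + norm c * e'"
    using \<psi>1(2) \<psi>2(2) by (intro add_mono mult_left_mono) auto
  finally have "dnorm (\<lambda>g. \<mu> g + c * \<nu> g - (\<psi>1 g + c * \<psi>2 g)) < e"
    using e e'(2) by linarith
  then show "\<exists>\<psi>\<in>delta_span. dnorm (\<lambda>g. \<mu> g + c * \<nu> g - \<psi> g) < e"
    using delta_span_lincomb[OF \<psi>1(1) \<psi>2(1)]
    by (intro bexI[of _ "\<lambda>g. \<psi>1 g + c * \<psi>2 g"]) simp_all
qed

lemma FreeM_cmult:
  fixes \<nu> :: "(nat \<Rightarrow> 'k::real_normed_field) \<Rightarrow> 'k"
  assumes "\<nu> \<in> FreeM"
  shows "(\<lambda>g. c * \<nu> g) \<in> FreeM"
  using FreeM_lincomb[OF assms assms, of "c - 1"] by (simp add: algebra_simps)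

section \<open>Existence of the linearisation\<close>

text \<open>The adjoint of the composition operator \<open>g \<mapsto> g \<circ> f\<close> on \<open>Lip\<^sub>0(M)\<close>.\<close>

definition hat_map :: "(nat \<Rightarrow> nat) \<Rightarrow> ((nat \<Rightarrow> 'k::real_normed_field) \<Rightarrow> 'k) \<Rightarrow> (nat \<Rightarrow> 'k) \<Rightarrow> 'k"
  where "hat_map f \<mu> = (\<lambda>g. if g \<in> Lip0 then \<mu> (\<lambda>x. g (f x)) else 0)"

lemma hat_map_lincomb:
  "hat_map f (\<lambda>g. \<mu> g + c * \<nu> g) = (\<lambda>g. hat_map f \<mu> g + c * hat_map f \<nu> g)"
  by (auto simp: hat_map_def)

context
  fixes f :: "nat \<Rightarrow> nat" and C :: real
  assumes f0: "f 0 = 0"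
    and C: "0 \<le> C" "\<And>x y. dM (f x) (f y) \<le> C * dM x y"
begin

lemma hat_map_Lip0_dual:
  fixes \<mu> :: "(nat \<Rightarrow> 'k::real_normed_field) \<Rightarrow> 'k"
  assumes \<mu>: "\<mu> \<in> Lip0_dual"
  shows "hat_map f \<mu> \<in> Lip0_dual" "dnorm (hat_map f \<mu>) \<le> C * dnorm \<mu>"
proof -
  note comp = Lip0_comp[OF _ f0 C(2)]
  have bound: "norm (hat_map f \<mu> g) \<le> (C * dnorm \<mu>) * lipnorm g" if g: "g \<in> Lip0" for g
  proof -
    have "norm (hat_map f \<mu> g) \<le> dnorm \<mu> * lipnorm (\<lambda>x. g (f x))"
      using Lip0_dual_bound[OF \<mu> comp(1)[OF g]] g by (simp add: hat_map_def)
    also have "\<dots> \<le> dnorm \<mu> * (lipnorm g * C)"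
      by (intro mult_left_mono comp(2)[OF g] dnorm_nonneg \<mu>)
    finally show ?thesis by (simp add: ac_simps)
  qed
  show "hat_map f \<mu> \<in> Lip0_dual"
    unfolding Lip0_dual_def mem_Collect_eq
  proof (intro conjI)
    show "\<forall>g\<in>Lip0. \<forall>h\<in>Lip0. hat_map f \<mu> (\<lambda>x. g x + h x) = hat_map f \<mu> g + hat_map f \<mu> h"
      using Lip0_dual_add[OF \<mu> comp(1) comp(1)] by (simp add: hat_map_def Lip0_add)
    show "\<forall>c. \<forall>g\<in>Lip0. hat_map f \<mu> (\<lambda>x. c * g x) = c * hat_map f \<mu> g"
      using Lip0_dual_cmult[OF \<mu> comp(1)] by (simp add: hat_map_def Lip0_cmult)
    show "\<exists>B. \<forall>g\<in>Lip0. norm (hat_map f \<mu> g) \<le> B * lipnorm g"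
      using bound by blast
    show "\<forall>g. g \<notin> Lip0 \<longrightarrow> hat_map f \<mu> g = 0"
      by (simp add: hat_map_def)
  qed
  show "dnorm (hat_map f \<mu>) \<le> C * dnorm \<mu>"
  proof (rule dnorm_least)
    fix g :: "nat \<Rightarrow> 'k" assume g: "g \<in> Lip0" "lipnorm g \<le> 1"
    have "C * dnorm \<mu> * lipnorm g \<le> C * dnorm \<mu> * 1"
      using g(2) C(1) dnorm_nonneg[OF \<mu>] by (intro mult_left_mono) simp_all
    then show "norm (hat_map f \<mu> g) \<le> C * dnorm \<mu>"
      using bound[OF g(1)] by simp
  qed
qed

lemma hat_map_delta: "hat_map f (delta x) = (delta (f x) :: (nat \<Rightarrow> 'k::real_normed_field) \<Rightarrow> 'k)"
  by (auto simp: fun_eq_iff hat_map_def delta_def Lip0_comp(1)[OF _ f0 C(2)])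

lemma hat_map_delta_span:
  "\<psi> \<in> delta_span \<Longrightarrow> hat_map f \<psi> \<in> (delta_span :: ((nat \<Rightarrow> 'k::real_normed_field) \<Rightarrow> 'k) set)"
proof (induction rule: delta_span_induct)
  case zero
  then show ?case by (simp add: hat_map_def zero_in_delta_span)
next
  case (add \<phi> c x)
  then show ?case
    using delta_span_add_delta by (simp add: hat_map_lincomb hat_map_delta)
qed

lemma hat_map_FreeM:
  fixes \<mu> :: "(nat \<Rightarrow> 'k::real_normed_field) \<Rightarrow> 'k"
  assumes \<mu>: "\<mu> \<in> FreeM"
  shows "hat_map f \<mu> \<in> FreeM"
  unfolding FreeM_def mem_Collect_eq
proof (intro conjI allI impI)
  show "hat_map f \<mu> \<in> Lip0_dual"
    using hat_map_Lip0_dual(1) FreeM_subset_Lip0_dual[OF \<mu>] .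
  fix e :: real assume e: "e > 0"
  have "0 < e / (C + 1)"
    using e C(1) by simp
  then obtain \<psi> where \<psi>: "\<psi> \<in> delta_span" "dnorm (\<lambda>g. \<mu> g - \<psi> g) < e / (C + 1)"
    using \<mu> unfolding FreeM_def by blast
  have diff: "(\<lambda>g. \<mu> g - \<psi> g) \<in> Lip0_dual"
    by (rule Lip0_dual_diff[OF FreeM_subset_Lip0_dual[OF \<mu>] Lip0_dual_if_delta_span[OF \<psi>(1)]])
  have "dnorm (\<lambda>g. hat_map f \<mu> g - hat_map f \<psi> g) = dnorm (hat_map f (\<lambda>g. \<mu> g - \<psi> g))"
    using hat_map_lincomb[of f \<mu> "-1" \<psi>] by simp
  also have "\<dots> \<le> C * dnorm (\<lambda>g. \<mu> g - \<psi> g)"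
    by (rule hat_map_Lip0_dual(2)[OF diff])
  also have "\<dots> \<le> C * (e / (C + 1))"
    using \<psi>(2) C(1) by (intro mult_left_mono) auto
  also have "\<dots> < e"
    using e C(1) by (simp add: field_simps)
  finally show "\<exists>\<psi>\<in>delta_span. dnorm (\<lambda>g. hat_map f \<mu> g - \<psi> g) < e"
    using hat_map_delta_span[OF \<psi>(1)] by blast
qed

end

lemma is_hat_hat_map:
  assumes "lipschitz_MM f" "f 0 = 0"
  shows "is_hat (hat_map f :: ((nat \<Rightarrow> 'k::real_normed_field) \<Rightarrow> 'k) \<Rightarrow> _) f"
proof -
  obtain C where C: "0 \<le> C" "\<And>x y. dM (f x) (f y) \<le> C * dM x y"
    using lipschitz_MM_nonneg_constant[OF assms(1)] by blast
  note hat = hat_map_Lip0_dual[OF assms(2) C] hat_map_FreeM[OF assms(2) C]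
    hat_map_delta[OF assms(2) C]
  have "hat_map f (\<lambda>g. \<mu> g + \<nu> g) = (\<lambda>g. hat_map f \<mu> g + hat_map f \<nu> g)"
    and "hat_map f (\<lambda>g. c * \<mu> g) = (\<lambda>g. c * hat_map f \<mu> g)"
    for c and \<mu> \<nu> :: "(nat \<Rightarrow> 'k) \<Rightarrow> 'k"
    by (auto simp: hat_map_def)
  with hat show ?thesis
    unfolding is_hat_def using FreeM_subset_Lip0_dual by blast
qed

section \<open>Uniqueness of the linearisation\<close>

lemma is_hat_lincomb:
  assumes "is_hat T f" "\<mu> \<in> FreeM" "\<nu> \<in> FreeM"
  shows "T (\<lambda>g. \<mu> g + c * \<nu> g) = (\<lambda>g. T \<mu> g + c * T \<nu> g)"
  using assms FreeM_cmult[OF assms(3)] unfolding is_hat_def by auto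

lemma is_hat_bounded:
  assumes "is_hat T f"
  obtains C where "0 \<le> C" "\<And>\<mu>. \<mu> \<in> FreeM \<Longrightarrow> dnorm (T \<mu>) \<le> C * dnorm \<mu>"
proof -
  obtain C where C: "\<And>\<mu>. \<mu> \<in> FreeM \<Longrightarrow> dnorm (T \<mu>) \<le> C * dnorm \<mu>"
    using assms unfolding is_hat_def by blast
  have "dnorm (T \<mu>) \<le> \<bar>C\<bar> * dnorm \<mu>" if "\<mu> \<in> FreeM" for \<mu>
    by (rule order_trans[OF C[OF that] mult_right_mono[OF abs_ge_self]])
      (rule dnorm_nonneg[OF FreeM_subset_Lip0_dual[OF that]])
  then show thesis
    using that[of "\<bar>C\<bar>"] by simp
qed

lemma is_hat_delta: "is_hat T f \<Longrightarrow> T (delta x) = delta (f x)"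
  unfolding is_hat_def by blast

lemma is_hat_zero:
  assumes "is_hat T f"
  shows "T (\<lambda>g. 0) = (\<lambda>g. 0)"
proof -
  have "T (\<lambda>g. 0 * delta 0 g) = (\<lambda>g. 0 * T (delta 0) g)"
    using assms FreeM_if_delta_span[OF delta_in_delta_span] unfolding is_hat_def by blast
  then show ?thesis by simp
qed

lemma is_hat_unique_on_delta_span:
  assumes T: "is_hat T f" and S: "is_hat S f" and \<psi>: "\<psi> \<in> delta_span"
  shows "T \<psi> = S \<psi>"
  using \<psi>
proof (induction rule: delta_span_induct)
  case zero
  then show ?case using is_hat_zero[OF T] is_hat_zero[OF S] by simp
next
  case (add \<phi> c x)
  note free = FreeM_if_delta_span[OF add(1)] FreeM_if_delta_span[OF delta_in_delta_span]
  show ?case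
    using is_hat_lincomb[OF T free, of c] is_hat_lincomb[OF S free, of c] add(2)
    by (simp add: is_hat_delta[OF T] is_hat_delta[OF S])
qed

lemma Lip0_dual_eq_zero_if_dnorm_le_0:
  fixes \<nu> :: "(nat \<Rightarrow> 'k::real_normed_field) \<Rightarrow> 'k"
  assumes "\<nu> \<in> Lip0_dual" "dnorm \<nu> \<le> 0"
  shows "\<nu> = (\<lambda>g. 0)"
proof
  fix g :: "nat \<Rightarrow> 'k"
  show "\<nu> g = 0"
  proof (cases "g \<in> Lip0")
    case True
    have "norm (\<nu> g) \<le> dnorm \<nu> * lipnorm g"
      by (rule Lip0_dual_bound[OF assms(1) True])
    also have "\<dots> \<le> 0"
      using assms(2) lipnorm_nonneg[OF True] by (simp add: mult_nonpos_nonneg)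
    finally show ?thesis by simp
  qed (rule Lip0_dual_outside[OF assms(1)])
qed

text \<open>Two linearisations agree on the span of the \<open>\<delta>(x)\<close>, and both are bounded, hence
  they agree on its closure.\<close>

lemma is_hat_unique:
  assumes T: "is_hat T f" and S: "is_hat S f" and \<mu>: "\<mu> \<in> FreeM"
  shows "T \<mu> = S \<mu>"
proof -
  obtain CT where CT: "0 \<le> CT" "\<And>\<mu>. \<mu> \<in> FreeM \<Longrightarrow> dnorm (T \<mu>) \<le> CT * dnorm \<mu>"
    using is_hat_bounded[OF T] by blast
  obtain CS where CS: "0 \<le> CS" "\<And>\<mu>. \<mu> \<in> FreeM \<Longrightarrow> dnorm (S \<mu>) \<le> CS * dnorm \<mu>"
    using is_hat_bounded[OF S] by blast
  have dual: "\<And>\<mu>. \<mu> \<in> FreeM \<Longrightarrow> T \<mu> \<in> Lip0_dual \<and> S \<mu> \<in> Lip0_dual"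
    using T S FreeM_subset_Lip0_dual unfolding is_hat_def by blast
  have "dnorm (\<lambda>g. T \<mu> g - S \<mu> g) \<le> 0 + e" if e: "0 < e" for e
  proof -
    have "0 < e / (CT + CS + 1)"
      using e CT(1) CS(1) by simp
    then obtain \<psi> where \<psi>: "\<psi> \<in> delta_span" "dnorm (\<lambda>g. \<mu> g - \<psi> g) < e / (CT + CS + 1)"
      using \<mu> unfolding FreeM_def by blast
    define \<delta> where "\<delta> = (\<lambda>g. \<mu> g - \<psi> g)"
    have \<psi>_free: "\<psi> \<in> FreeM"
      by (rule FreeM_if_delta_span[OF \<psi>(1)])
    have \<delta>: "\<delta> \<in> FreeM"
      using FreeM_lincomb[OF \<mu> \<psi>_free, of "-1"] by (simp add: \<delta>_def)
    have "T \<mu> = T (\<lambda>g. \<psi> g + 1 * \<delta> g)" "S \<mu> = S (\<lambda>g. \<psi> g + 1 * \<delta> g)"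
      by (simp_all add: \<delta>_def)
    then have "(\<lambda>g. T \<mu> g - S \<mu> g) = (\<lambda>g. T \<delta> g + (-1) * S \<delta> g)"
      using is_hat_lincomb[OF T \<psi>_free \<delta>, of 1] is_hat_lincomb[OF S \<psi>_free \<delta>, of 1]
        is_hat_unique_on_delta_span[OF T S \<psi>(1)]
      by simp
    then have "dnorm (\<lambda>g. T \<mu> g - S \<mu> g) \<le> dnorm (T \<delta>) + dnorm (S \<delta>)"
      using dnorm_lincomb_le[of "T \<delta>" "S \<delta>" "-1"] dual[OF \<delta>] by simp
    also have "\<dots> \<le> (CT + CS) * dnorm \<delta>"
      using CT(2)[OF \<delta>] CS(2)[OF \<delta>] by (simp add: distrib_right)
    also have "\<dots> \<le> (CT + CS) * (e / (CT + CS + 1))"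
      using \<psi>(2) CT(1) CS(1) by (intro mult_left_mono) (simp_all add: \<delta>_def)
    also have "\<dots> \<le> 0 + e"
      using e CT(1) CS(1) by (simp add: field_simps)
    finally show ?thesis .
  qed
  then have "dnorm (\<lambda>g. T \<mu> g - S \<mu> g) \<le> 0"
    by (rule field_le_epsilon)
  moreover have "(\<lambda>g. T \<mu> g - S \<mu> g) \<in> Lip0_dual"
    using Lip0_dual_diff dual[OF \<mu>] by blast
  ultimately have "(\<lambda>g. T \<mu> g - S \<mu> g) = (\<lambda>g. 0)"
    by (intro Lip0_dual_eq_zero_if_dnorm_le_0)
  then show ?thesis
    by (simp add: fun_eq_iff)
qed

section \<open>Maps into \<open>{0, 1}\<close>\<close>

definition nonzero_indicator :: "nat \<Rightarrow> 'k::real_normed_field"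
  where "nonzero_indicator n = (if n = 0 then 0 else 1)"

lemma nonzero_indicator_bound:
  "norm (nonzero_indicator x - nonzero_indicator y :: 'k::real_normed_field) \<le> 1 * dM x y"
proof (cases "x = y")
  case False
  have "norm (nonzero_indicator x - nonzero_indicator y :: 'k) \<le> 1"
    by (simp add: nonzero_indicator_def)
  then show ?thesis using dM_ge_one[OF False] by simp
qed simp

lemma nonzero_indicator_Lip0: "(nonzero_indicator :: nat \<Rightarrow> 'k::real_normed_field) \<in> Lip0"
  using nonzero_indicator_bound
  by (auto simp: Lip0_iff nonzero_indicator_def[of 0] intro!: exI[of _ 1])

lemma lipnorm_nonzero_indicator: "lipnorm (nonzero_indicator :: nat \<Rightarrow> 'k::real_normed_field) \<le> 1"
  using nonzero_indicator_bound by (intro lipnorm_least) blast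

lemma hat_map_rank_one:
  fixes \<mu> :: "(nat \<Rightarrow> 'k::real_normed_field) \<Rightarrow> 'k"
  assumes f: "f 0 = 0" "\<And>x. f x \<le> 1" and \<mu>: "\<mu> \<in> Lip0_dual" and g: "g \<in> Lip0"
  shows "hat_map f \<mu> g = hat_map f \<mu> nonzero_indicator * g 1"
proof -
  have "g (f x) = g 1 * nonzero_indicator (f x)" for x
    using f(2)[of x] g by (cases "f x") (auto simp: Lip0_def nonzero_indicator_def)
  then have "\<mu> (\<lambda>x. g (f x)) = g 1 * \<mu> (\<lambda>x. nonzero_indicator (f x))"
    using Lip0_dual_cmult[OF \<mu>
        Lip0_comp(1)[OF nonzero_indicator_Lip0 f(1) dM_le_if_le_one[of f, OF f(2)]]]
    by simp
  moreover have "(nonzero_indicator :: nat \<Rightarrow> 'k) \<in> Lip0"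
    by (rule nonzero_indicator_Lip0)
  ultimately show ?thesis
    using g by (simp add: hat_map_def mult.commute)
qed

lemma is_hat_rank_one:
  assumes T: "is_hat T f" and f: "f 0 = 0" "\<And>x. f x \<le> 1"
    and \<mu>: "\<mu> \<in> FreeM" and g: "g \<in> Lip0"
  shows "T \<mu> g = T \<mu> nonzero_indicator * g 1"
  using is_hat_unique[OF T is_hat_hat_map[OF lipschitz_MM_if_le_one[of f, OF f(2)] f(1)] \<mu>]
    hat_map_rank_one[of f, OF f FreeM_subset_Lip0_dual[OF \<mu>] g]
  by simp

lemma compact_op_FreeM_if_le_one:
  fixes T :: "((nat \<Rightarrow> 'k::{real_normed_field,heine_borel}) \<Rightarrow> 'k) \<Rightarrow> (nat \<Rightarrow> 'k) \<Rightarrow> 'k"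
  assumes T: "is_hat T f" and f: "f 0 = 0" "\<And>x. f x \<le> 1"
  shows "compact_op_FreeM T"
  unfolding compact_op_FreeM_def
proof (intro allI impI)
  fix s :: "nat \<Rightarrow> (nat \<Rightarrow> 'k) \<Rightarrow> 'k"
  assume s: "\<forall>n. s n \<in> FreeM \<and> dnorm (s n) \<le> 1"
  obtain C where C: "0 \<le> C" "\<And>\<mu>. \<mu> \<in> FreeM \<Longrightarrow> dnorm (T \<mu>) \<le> C * dnorm \<mu>"
    using is_hat_bounded[OF T] by blast
  have dual: "T (s n) \<in> Lip0_dual" for n
    using T s FreeM_subset_Lip0_dual unfolding is_hat_def by blast
  define a where "a n = T (s n) nonzero_indicator" for n
  have "norm (a n) \<le> C" for n
  proof -
    have "norm (a n) \<le> dnorm (T (s n))"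
      unfolding a_def by (rule dnorm_upper[OF dual nonzero_indicator_Lip0 lipnorm_nonzero_indicator])
    also have "\<dots> \<le> C * dnorm (s n)"
      using C(2) s by blast
    also have "\<dots> \<le> C * 1"
      using s C(1) by (intro mult_left_mono) auto
    finally show ?thesis by simp
  qed
  then have "bounded (range a)"
    unfolding bounded_iff by blast
  then obtain r l where r: "strict_mono r" "(a \<circ> r) \<longlonglongrightarrow> l"
    using bounded_imp_convergent_subsequence by blast
  define \<mu> where "\<mu> = (\<lambda>g. l * delta 1 g)"
  have \<mu>: "\<mu> \<in> FreeM"
    unfolding \<mu>_def by (rule FreeM_cmult[OF FreeM_if_delta_span[OF delta_in_delta_span]])
  have dle: "dnorm (\<lambda>g. T (s (r n)) g - \<mu> g) \<le> norm (a (r n) - l)" for n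
  proof (rule dnorm_least)
    fix g :: "nat \<Rightarrow> 'k" assume g: "g \<in> Lip0" "lipnorm g \<le> 1"
    have "T (s (r n)) g = a (r n) * g 1"
      unfolding a_def using s by (intro is_hat_rank_one[of T f, OF T f _ g(1)]) blast
    then have "T (s (r n)) g - \<mu> g = (a (r n) - l) * g 1"
      using g(1) by (simp add: \<mu>_def delta_def algebra_simps)
    moreover have "norm (g 1) \<le> 1"
      using norm_le_lipnorm[OF g(1), of 1] g(2) by simp
    then have "norm (a (r n) - l) * norm (g 1) \<le> norm (a (r n) - l) * 1"
      by (intro mult_left_mono) simp_all
    ultimately show "norm (T (s (r n)) g - \<mu> g) \<le> norm (a (r n) - l)"
      by (simp add: norm_mult)
  qed
  have dge: "0 \<le> dnorm (\<lambda>g. T (s (r n)) g - \<mu> g)" for n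
    by (rule dnorm_nonneg[OF Lip0_dual_diff[OF dual FreeM_subset_Lip0_dual[OF \<mu>]]])
  have "(\<lambda>n. norm (a (r n) - l)) \<longlonglongrightarrow> 0"
    using r(2) by (simp add: o_def tendsto_norm_zero_iff LIM_zero_iff)
  then have "(\<lambda>n. dnorm (\<lambda>g. T (s (r n)) g - \<mu> g)) \<longlonglongrightarrow> 0"
    by (rule Lim_null_comparison[rotated]) (use dle dge in simp)
  with r(1) \<mu> show "\<exists>r \<mu>. strict_mono r \<and> \<mu> \<in> FreeM \<and> (\<lambda>n. dnorm (\<lambda>g. T (s (r n)) g - \<mu> g)) \<longlonglongrightarrow> 0"
    by blast
qed

lemma hat_compact_if_le_one:
  assumes "f 0 = 0" "\<And>x. f x \<le> 1"
  shows "hat_compact TYPE('k::{real_normed_field,heine_borel}) f"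
  unfolding hat_compact_def
  using is_hat_hat_map[OF lipschitz_MM_if_le_one[of f, OF assms(2)] assms(1)]
    compact_op_FreeM_if_le_one[of _ f, OF _ assms]
  by blast

theorem mainTheorem12:
  fixes f :: "nat \<Rightarrow> nat" and x y :: "nat \<Rightarrow> nat"
  assumes f_def: "\<And>n. f (2 * n) = 0" "\<And>n. f (2 * n + 1) = 1"
    and xy_def: "\<And>n. x n = 2 * n + 1" "\<And>n. y n = 2 * n"
  shows "lipschitz_MM f \<and> f 0 = 0
    \<and> hat_compact TYPE(real) f \<and> hat_compact TYPE(complex) f
    \<and> filterlim (\<lambda>n. dM (x n) 0) at_top sequentially
    \<and> filterlim (\<lambda>n. dM (y n) 0) at_top sequentially
    \<and> (\<forall>n. dM (f (x n)) (f (y n)) / dM (x n) (y n) = 1)"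
proof -
  have f_le_1: "f n \<le> 1" for n
  proof (cases "even n")
    case True
    then obtain m where "n = 2 * m" by blast
    then show ?thesis using f_def(1) by simp
  next
    case False
    then obtain m where "n = 2 * m + 1" by (blast elim: oddE)
    then show ?thesis using f_def(2) by simp
  qed
  have f_0: "f 0 = 0"
    using f_def(1)[of 0] by simp
  have "dM (x n) 0 = 2 * real n + 1" "dM (y n) 0 = 2 * real n" for n
    by (simp_all add: dM_def xy_def)
  then have "filterlim (\<lambda>n. dM (x n) 0) at_top sequentially"
    and "filterlim (\<lambda>n. dM (y n) 0) at_top sequentially"
    by (simp_all, real_asymp+)
  moreover have "\<forall>n. dM (f (x n)) (f (y n)) / dM (x n) (y n) = 1"
    using f_def by (simp add: dM_def xy_def)
  ultimately show ?thesis
    using lipschitz_MM_if_le_one[of f, OF f_le_1] f_0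
      hat_compact_if_le_one[of f, OF f_0 f_le_1, where 'k = real]
      hat_compact_if_le_one[of f, OF f_0 f_le_1, where 'k = complex]
    by blast
qed

end
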